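(* (1) Let $p$ be an odd prime and $\alpha,\alpha'\in p\mathbb{Z}_p$ nonzero with $\alpha^{-1}-(\alpha')^{-1}\in\mathbb{Z}_p$. Then there exists $u\in\mathbb{Z}_p^\times$ with $\alpha'=\alpha u^2$. (2) Let $p=2$ and let $M$ be one of the matrices $$(2^d),\ (3\cdot 2^d),\ (5\cdot 2^d),\ (7\cdot 2^d),\ \begin{pmatrix}0&2^d\\2^d&0\end{pmatrix},\ \begin{pmatrix}2^{d+1}&2^d\\2^d&2^{d+1}\end{pmatrix}$$ with $d\ge 1$. Let $M'$ be a nonsingular symmetric matrix over $\mathbb{Z}_2$ of the same size as $M$ such that $M^{-1}-(M')^{-1}$ has entries in $\mathbb{Z}_2$. Consider the sets $\mathcal{T}_1=\{(2),(6),(10),(14)\}$, $\mathcal{T}_2=\left\{\begin{pmatrix}0&2\\2&0\end{pmatrix},\begin{pmatrix}4&2\\2&4\end{pmatrix}\right\}$, $\mathcal{T}_3=\{(4),(20)\}$, $\mathcal{T}_4=\{(12),(28)\}$. If $M\in\mathcal{T}_i$ for some $1\le i\le 4$, then $M'$ is congruent to a matrix in $\mathcal{T}_i$; otherwise $M'$ is congruent to $M$.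
   Context: $\mathbb{Z}_p$ denotes the $p$-adic integers. Two symmetric $n\times n$ matrices $A,B$ over $\mathbb{Z}_p$ are congruent if $B=UAU^T$ for some $U\in\mathrm{GL}_n(\mathbb{Z}_p)$. *)

theory Defs
  imports "Jordan_Normal_Form.Determinant" "HOL-Library.Numeral_Type"
begin

section \<open>The p-adic integers Z_p, p = CARD('p), as the inverse limit of Z/p^n Z\<close>

text \<open>A p-adic integer is represented by its sequence of residues: f n is the residue
  modulo p^n (in the range 0..p^n-1), and the residues are compatible,
  f m mod p^n = f n for n \<le> m.\<close>

definition padic_seqs :: "'p itself \<Rightarrow> (nat \<Rightarrow> int) set" where
  "padic_seqs _ = {f. \<forall>n m. n \<le> m \<longrightarrow> f m mod (int CARD('p) ^ n) = f n}"

typedef ('p::card2) padic_int = "padic_seqs TYPE('p)"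
  by (rule exI[of _ "\<lambda>_. 0"]) (simp add: padic_seqs_def)

setup_lifting type_definition_padic_int

lemma padic_mod_mod:
  "n \<le> m \<Longrightarrow> x mod (int c ^ m) mod (int c ^ n) = x mod (int c ^ n)"
  by (simp add: le_imp_power_dvd mod_mod_cancel)

instantiation padic_int :: (card2) comm_ring_1
begin

lift_definition zero_padic_int :: "'a padic_int" is "\<lambda>_. 0"
  by (simp add: padic_seqs_def)

lift_definition one_padic_int :: "'a padic_int" is "\<lambda>n. 1 mod (int CARD('a) ^ n)"
  by (simp add: padic_seqs_def padic_mod_mod)

lift_definition plus_padic_int :: "'a padic_int \<Rightarrow> 'a padic_int \<Rightarrow> 'a padic_int"
  is "\<lambda>f g n. (f n + g n) mod (int CARD('a) ^ n)"
  unfolding padic_seqs_def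
  by (auto simp: padic_mod_mod) (metis mod_add_eq)

lift_definition uminus_padic_int :: "'a padic_int \<Rightarrow> 'a padic_int"
  is "\<lambda>f n. (- f n) mod (int CARD('a) ^ n)"
  unfolding padic_seqs_def
  by (auto simp: padic_mod_mod) (metis mod_minus_eq)

lift_definition minus_padic_int :: "'a padic_int \<Rightarrow> 'a padic_int \<Rightarrow> 'a padic_int"
  is "\<lambda>f g n. (f n - g n) mod (int CARD('a) ^ n)"
  unfolding padic_seqs_def
  by (auto simp: padic_mod_mod) (metis mod_diff_eq)

lift_definition times_padic_int :: "'a padic_int \<Rightarrow> 'a padic_int \<Rightarrow> 'a padic_int"
  is "\<lambda>f g n. (f n * g n) mod (int CARD('a) ^ n)"
  unfolding padic_seqs_def
  by (auto simp: padic_mod_mod) (metis mod_mult_eq)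

instance
proof
  fix a b c :: "'a padic_int"
  show "a * b * c = a * (b * c)"
    by transfer (simp add: mod_mult_left_eq mod_mult_right_eq mult.assoc)
  show "a * b = b * a" by transfer (simp add: mult.commute)
  show "1 * a = a" by transfer (auto simp: padic_seqs_def mod_mult_left_eq)
  show "a + b + c = a + (b + c)"
    by transfer (simp add: mod_add_left_eq mod_add_right_eq add.assoc)
  show "a + b = b + a" by transfer (simp add: add.commute)
  show "0 + a = a" by transfer (auto simp: padic_seqs_def)
  show "- a + a = 0" by transfer (simp add: mod_add_left_eq)
  show "a - b = a + - b" by transfer (simp add: mod_add_right_eq)
  show "(a + b) * c = a * c + b * c"
    by transfer (simp add: mod_mult_left_eq mod_add_eq distrib_right)
  show "(0::'a padic_int) \<noteq> 1"
  proof
    assume "(0::'a padic_int) = 1"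
    hence "(\<lambda>_. 0::int) = (\<lambda>n. 1 mod (int CARD('a) ^ n))"
      by (metis zero_padic_int.rep_eq one_padic_int.rep_eq)
    hence "(0::int) = 1 mod int CARD('a)" by (metis power_one_right)
    moreover have "int CARD('a) \<ge> 2" using two_le_card[where 'a='a] by linarith
    ultimately show False by simp
  qed
qed

end

text \<open>For nonzero a, b in Z_p: a^{-1} - b^{-1} (computed in the fraction field Q_p)
  lies in Z_p.  Since a^{-1} - b^{-1} = (b - a)/(a b), this means a b divides b - a.\<close>
definition inv_diff_integral :: "'a::comm_ring_1 \<Rightarrow> 'a \<Rightarrow> bool" where
  "inv_diff_integral a b \<longleftrightarrow> a * b dvd b - a"

text \<open>For square matrices M, M' of size n over Z_p with nonzero determinants:
  M^{-1} - M'^{-1} has entries in Z_p, where over the fraction field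
  M^{-1} = adj M / det M.  Entry (i,j) equals
  (det M' * adj M (i,j) - det M * adj M' (i,j)) / (det M * det M').\<close>
definition mat_inv_diff_integral :: "'a::comm_ring_1 mat \<Rightarrow> 'a mat \<Rightarrow> bool" where
  "mat_inv_diff_integral M M' \<longleftrightarrow>
     (\<forall>i < dim_row M. \<forall>j < dim_row M.
        det M * det M' dvd det M' * adj_mat M $$ (i,j) - det M * adj_mat M' $$ (i,j))"

definition symmetric_mat :: "'a mat \<Rightarrow> bool" where
  "symmetric_mat A \<longleftrightarrow> square_mat A \<and> A\<^sup>T = A"

definition mat_congruent :: "'a::comm_ring_1 mat \<Rightarrow> 'a mat \<Rightarrow> bool" where
  "mat_congruent A B \<longleftrightarrow> (\<exists>U \<in> carrier_mat (dim_row A) (dim_row A).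
      invertible_mat U \<and> B = U * A * U\<^sup>T)"

definition mat1 :: "'a \<Rightarrow> 'a mat" where
  "mat1 a = mat 1 1 (\<lambda>_. a)"

definition mat2 :: "'a \<Rightarrow> 'a \<Rightarrow> 'a \<Rightarrow> 'a mat" where
  "mat2 a b c = mat 2 2 (\<lambda>(i,j). if i = 0 \<and> j = 0 then a else if i = 1 \<and> j = 1 then c else b)"

definition M_list :: "nat \<Rightarrow> 'a::comm_ring_1 mat set" where
  "M_list d = {mat1 (2 ^ d), mat1 (3 * 2 ^ d), mat1 (5 * 2 ^ d), mat1 (7 * 2 ^ d),
               mat2 0 (2 ^ d) 0, mat2 (2 ^ (d+1)) (2 ^ d) (2 ^ (d+1))}"

definition T_set :: "nat \<Rightarrow> 'a::comm_ring_1 mat set" where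
  "T_set i = (if i = 1 then {mat1 2, mat1 6, mat1 10, mat1 14}
              else if i = 2 then {mat2 0 2 0, mat2 4 2 4}
              else if i = 3 then {mat1 4, mat1 20}
              else if i = 4 then {mat1 12, mat1 28}
              else {})"

end

(*
  Write the first matrix as t H with t = p^a (resp. 2^d) and H unimodular. Integrality of the
  difference of the inverses forces the second matrix to be t H' with H' = H modulo t: for 1x1
  matrices this is immediate, for 2x2 matrices it follows by writing each entry condition as
  t h x = D xi and comparing determinants. For odd p the unit H'/H is 1 modulo p, hence a square
  by Hensel's lemma. For p = 2, an odd 2-adic integer is determined up to unit squares by its
  residue modulo 8, and an even binary form [[2x, e], [e, 2z]] with e odd is congruent to
  [[0, 1], [1, 0]] if xz is even and to [[2, 1], [1, 2]] otherwise, again by Hensel's lemma.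
  The congruence H' = H modulo 2^d fixes the residue class modulo 8 when d >= 3, modulo 4 when
  d = 2, and the type of the binary form when d >= 2; this is the case distinction of the theorem.
  Since Z_p is modelled by coherent residue sequences, Hensel's lemma is proved by lifting roots
  modulo p^n one power at a time and passing to the limit.
*)
theory Submission
  imports Defs "HOL-Number_Theory.Cong"
begin

section \<open>Residues of \<open>p\<close>-adic integers\<close>

abbreviation residue :: "'p::card2 padic_int \<Rightarrow> nat \<Rightarrow> int" where
  "residue \<equiv> Rep_padic_int"

lemma int_card_ge_2: "int CARD('p::card2) \<ge> 2"
  using two_le_card[where 'a='p] by linarith

lemma residue_mod_pow:
  "n \<le> m \<Longrightarrow> residue (x::'p::card2 padic_int) m mod int CARD('p) ^ n = residue x n"
  using Rep_padic_int[of x] unfolding padic_seqs_def by auto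

lemma residue_mod [simp]: "residue (x::'p::card2 padic_int) n mod int CARD('p) ^ n = residue x n"
  by (rule residue_mod_pow) simp

lemma residue_bounds:
  "0 \<le> residue (x::'p::card2 padic_int) n" "residue x n < int CARD('p) ^ n"
  using int_card_ge_2[where 'p='p] pos_mod_sign pos_mod_bound residue_mod[of x n]
  by (metis zero_less_power less_le_trans zero_less_numeral)+

lemma padic_int_eqI: "(\<And>n. residue x n = residue y n) \<Longrightarrow> x = y"
  by (simp add: Rep_padic_int_inject[symmetric] fun_eq_iff)

lemma residue_eq_iff_cong:
  "residue (x::'p::card2 padic_int) n = residue (y::'p padic_int) n \<longleftrightarrow>
     [residue x n = residue y n] (mod int CARD('p) ^ n)"
  by (simp only: cong_def residue_mod)

lemmas residue_ops = zero_padic_int.rep_eq one_padic_int.rep_eq plus_padic_int.rep_eq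
  minus_padic_int.rep_eq uminus_padic_int.rep_eq times_padic_int.rep_eq

lemma residue_of_int [simp]:
  "residue (of_int k :: 'p::card2 padic_int) n = k mod int CARD('p) ^ n"
  by (induction k rule: int_induct[where k = 0]) (simp_all add: residue_ops mod_simps)

lemma residue_of_nat [simp]:
  "residue (of_nat k :: 'p::card2 padic_int) n = int k mod int CARD('p) ^ n"
  by (metis of_int_of_nat_eq residue_of_int)

lemma residue_numeral [simp]:
  "residue (numeral k :: 'p::card2 padic_int) n = numeral k mod int CARD('p) ^ n"
  by (metis of_int_numeral residue_of_int)

lemma residue_quadratic_cong:
  "[residue (A * w * w + B * w + C :: 'p::card2 padic_int) n =
      residue A n * residue w n * residue w n + residue B n * residue w n + residue C n]
     (mod int CARD('p) ^ n)"
  by (simp add: cong_def residue_ops mod_simps)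

lemma padic_int_limit:
  assumes coherent: "\<And>n. [g (Suc n) = g n] (mod int CARD('p::card2) ^ n)"
  obtains x :: "'p::card2 padic_int" where "\<And>n. [residue x n = g n] (mod int CARD('p) ^ n)"
proof -
  let ?q = "int CARD('p)"
  have coherent_le: "[g m = g n] (mod ?q ^ n)" if "n \<le> m" for n m
    using that
  proof (induction m rule: dec_induct)
    case (step k)
    have "[g (Suc k) = g k] (mod ?q ^ n)"
      using coherent[of k] cong_dvd_modulus le_imp_power_dvd step.hyps(1) by blast
    then show ?case using step.IH cong_trans by blast
  qed simp
  have "(\<lambda>n. g n mod ?q ^ n) \<in> padic_seqs TYPE('p)"
    unfolding padic_seqs_def
  proof (intro CollectI allI impI)
    fix n m :: nat
    assume "n \<le> m"
    then have "g m mod ?q ^ m mod ?q ^ n = g m mod ?q ^ n" by (rule padic_mod_mod)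
    also have "\<dots> = g n mod ?q ^ n" using coherent_le[OF \<open>n \<le> m\<close>] unfolding cong_def .
    finally show "g m mod ?q ^ m mod ?q ^ n = g n mod ?q ^ n" .
  qed
  then have "residue (Abs_padic_int (\<lambda>n. g n mod ?q ^ n) :: 'p padic_int) = (\<lambda>n. g n mod ?q ^ n)"
    by (rule Abs_padic_int_inverse)
  then show thesis by (intro that[of "Abs_padic_int (\<lambda>n. g n mod ?q ^ n)"]) (simp add: cong_def)
qed

lemma residue_pow_card:
  "residue (of_nat CARD('p) ^ k :: 'p::card2 padic_int) n = int CARD('p) ^ k mod int CARD('p) ^ n"
  using residue_of_nat[of "CARD('p) ^ k" n, where 'p='p] by simp

lemma pow_dvd_if_residue_eq_0:
  assumes "residue (x::'p::card2 padic_int) k = 0"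
  shows "of_nat CARD('p) ^ k dvd x"
proof -
  let ?q = "int CARD('p)"
  have "?q ^ k dvd residue x (n + k)" for n
    using residue_mod_pow[of k "n + k" x] assms by (simp add: dvd_eq_mod_eq_0)
  define g where "g n = residue x (n + k) div ?q ^ k" for n
  have g: "residue x (n + k) = ?q ^ k * g n" for n
    using \<open>\<And>n. ?q ^ k dvd residue x (n + k)\<close> by (simp add: g_def)
  have "?q ^ k * (g (Suc n) mod ?q ^ n) = ?q ^ k * g n" for n
  proof -
    have "?q ^ k * (g (Suc n) mod ?q ^ n) = residue x (Suc n + k) mod (?q ^ k * ?q ^ n)"
      by (simp only: g mod_mult_mult1)
    also have "\<dots> = residue x (n + k)"
      by (simp only: residue_mod_pow power_add[symmetric] add.commute[of k])
    finally show ?thesis by (simp only: g)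
  qed
  then have "g (Suc n) mod ?q ^ n = g n" for n
    using int_card_ge_2[where 'p='p] by simp
  then have "[g (Suc n) = g n] (mod ?q ^ n)" for n
    by (metis cong_def mod_mod_trivial)
  then obtain y :: "'p padic_int" where y: "\<And>n. [residue y n = g n] (mod ?q ^ n)"
    using padic_int_limit by blast
  have "of_nat CARD('p) ^ k * y = x"
  proof (rule padic_int_eqI)
    fix n
    have "[residue (of_nat CARD('p) ^ k * y) n = ?q ^ k * residue y n] (mod ?q ^ n)"
      by (simp add: residue_ops residue_pow_card cong_def mod_simps)
    also have "[?q ^ k * residue y n = ?q ^ k * g n] (mod ?q ^ n)"
      using y by (rule cong_scalar_left)
    also have "?q ^ k * g n = residue x (n + k)" by (simp add: g)
    also have "[\<dots> = residue x n] (mod ?q ^ n)"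
      by (simp add: cong_def residue_mod_pow)
    finally show "residue (of_nat CARD('p) ^ k * y) n = residue x n"
      by (simp add: residue_eq_iff_cong)
  qed
  then show ?thesis by (metis dvd_triv_left)
qed


lemma pow_dvd_iff_residue:
  "of_nat CARD('p) ^ k dvd (x::'p::card2 padic_int) \<longleftrightarrow> residue x k = 0"
proof
  assume "of_nat CARD('p) ^ k dvd x"
  then obtain y where "x = of_nat CARD('p) ^ k * y" ..
  then show "residue x k = 0" by (simp add: residue_ops residue_pow_card)
qed (rule pow_dvd_if_residue_eq_0)

lemma p_dvd_iff_residue:
  "of_nat CARD('p) dvd (x::'p::card2 padic_int) \<longleftrightarrow> residue x 1 = 0"
  using pow_dvd_iff_residue[of 1 x] by simp

lemma residue_zero [simp]: "residue 0 n = 0"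
  by (simp add: zero_padic_int.rep_eq)

lemma residue_eq_0_iff_cong:
  "residue (x::'p::card2 padic_int) n = 0 \<longleftrightarrow> [residue x n = 0] (mod int CARD('p) ^ n)"
  by (simp only: cong_def residue_mod mod_0)

lemma residue_cong_lower:
  "n \<le> m \<Longrightarrow> [residue (x::'p::card2 padic_int) m = residue x n] (mod int CARD('p) ^ n)"
  by (simp add: cong_def residue_mod_pow)

lemma cong_pow_imp_cong:
  "[a = b] (mod q ^ n) \<Longrightarrow> n \<ge> 1 \<Longrightarrow> [a = b] (mod (q::int))"
  by (erule cong_dvd_modulus) simp

lemma p_dvd_iff_dvd_residue:
  assumes "n \<ge> 1"
  shows "of_nat CARD('p) dvd (x::'p::card2 padic_int) \<longleftrightarrow> int CARD('p) dvd residue x n"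
proof -
  have "[residue x n = residue x 1] (mod int CARD('p))"
    using residue_cong_lower[OF assms, of x] by simp
  then have "int CARD('p) dvd residue x n \<longleftrightarrow> int CARD('p) dvd residue x 1"
    by (rule cong_dvd_iff)
  also have "\<dots> \<longleftrightarrow> residue x 1 = 0"
    using residue_mod[of x 1] by (auto simp: dvd_eq_mod_eq_0)
  finally show ?thesis by (simp add: p_dvd_iff_residue)
qed

lemma residue_linear_cong:
  "[residue (2 * A * w + B :: 'p::card2 padic_int) n = 2 * residue A n * residue w n + residue B n]
     (mod int CARD('p) ^ n)"
  by (simp add: cong_def residue_ops mod_simps)

text \<open>Distinct integers have distinct residues modulo a large power of \<open>p\<close>. The instance lets
  the simplifier tell numerals apart, e.g. the matrices in the sets \<open>T_set i\<close>.\<close>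
instance padic_int :: (card2) ring_char_0
proof
  show "inj (of_nat :: nat \<Rightarrow> 'a padic_int)"
  proof (rule injI)
    fix m n :: nat
    let ?Q = "int CARD('a) ^ (m + n)"
    assume "(of_nat m :: 'a padic_int) = of_nat n"
    then have residues:
      "residue (of_nat m :: 'a padic_int) (m + n) = residue (of_nat n :: 'a padic_int) (m + n)"
      by simp
    have "int (m + n) < 2 ^ (m + n)"
      using less_exp[of "m + n"] by (metis of_nat_less_iff of_nat_numeral of_nat_power)
    then have "int (m + n) < ?Q"
      using int_card_ge_2[where 'p='a] by (meson less_le_trans power_mono zero_le_numeral)
    then have "int m < ?Q" and "int n < ?Q" by linarith+
    with residues show "m = n" by simp
  qed
qed

section \<open>Hensel's lemma for quadratic polynomials\<close>

lemma quadratic_root_lift_int: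
  fixes q A B C r :: int
  assumes "prime q" and "n \<ge> 1"
    and root: "[A * r * r + B * r + C = 0] (mod q ^ n)"
    and simple: "\<not> q dvd 2 * A * r + B"
  obtains r' where "[r' = r] (mod q ^ n)" and "[A * r' * r' + B * r' + C = 0] (mod q ^ Suc n)"
proof -
  obtain m where m: "A * r * r + B * r + C = q ^ n * m"
    using root unfolding cong_0_iff ..
  have "coprime (2 * A * r + B) q"
    using simple \<open>prime q\<close> by (simp add: prime_imp_coprime coprime_commute)
  then obtain e where "[(2 * A * r + B) * e = 1] (mod q)"
    using cong_solve_coprime_int by blast
  then obtain k where k: "(2 * A * r + B) * e = 1 + q * k"
    unfolding cong_iff_dvd_diff by (metis dvdE diff_eq_eq add.commute)
  \<comment> \<open>Newton step: \<open>e\<close> inverts the derivative modulo \<open>q\<close>.\<close>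
  define r' where "r' = r - q ^ n * m * e"
  have "A * r' * r' + B * r' + C =
      (A * r * r + B * r + C) - q ^ n * m * ((2 * A * r + B) * e) + q ^ n * q ^ n * (A * (m * e) * (m * e))"
    unfolding r'_def by (simp add: algebra_simps)
  also have "\<dots> = q ^ Suc n * (- m * k) + q ^ n * q ^ n * (A * (m * e) * (m * e))"
    unfolding m k by (simp add: algebra_simps)
  finally have expand:
    "A * r' * r' + B * r' + C = q ^ Suc n * (- m * k) + q ^ n * q ^ n * (A * (m * e) * (m * e))" .
  have "q ^ Suc n dvd q ^ (n + n)"
    using \<open>n \<ge> 1\<close> by (intro le_imp_power_dvd) simp
  then have "q ^ Suc n dvd q ^ n * q ^ n"
    by (simp only: power_add)
  then have "[A * r' * r' + B * r' + C = 0] (mod q ^ Suc n)"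
    unfolding expand cong_0_iff by simp
  show thesis
  proof (rule that)
    show "[r' = r] (mod q ^ n)"
      unfolding r'_def by (simp add: cong_iff_dvd_diff)
  qed fact
qed

lemma quadratic_coherent_roots_int:
  fixes q r :: int and A B C :: "nat \<Rightarrow> int"
  assumes "prime q"
    and coherent: "\<And>n m. n \<le> m \<Longrightarrow>
      [A m = A n] (mod q ^ n) \<and> [B m = B n] (mod q ^ n) \<and> [C m = C n] (mod q ^ n)"
    and root: "[A 1 * r * r + B 1 * r + C 1 = 0] (mod q)"
    and simple: "\<not> q dvd 2 * A 1 * r + B 1"
  obtains g where "\<And>n. [A n * g n * g n + B n * g n + C n = 0] (mod q ^ n)"
    and "\<And>n. [g (Suc n) = g n] (mod q ^ n)" and "[g 1 = r] (mod q)"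
proof -
  define f where "f n s = A n * s * s + B n * s + C n" for n s
  define f' where "f' n s = 2 * A n * s + B n" for n s
  have f_cong: "[f m s = f n s] (mod q ^ n)" "[f' m s = f' n s] (mod q ^ n)"
    if "n \<le> m" for n m s
    using coherent[OF that] unfolding f_def f'_def by (intro cong_add cong_mult cong_refl; blast)+
  have simple_n: "\<not> q dvd f' n s" if "n \<ge> 1" and "[s = r] (mod q)" for n s
  proof -
    have "[f' n s = f' 1 s] (mod q)" using f_cong(2)[OF that(1)] by simp
    also have "[f' 1 s = f' 1 r] (mod q)"
      unfolding f'_def using that(2) by (intro cong_add cong_mult cong_refl)
    finally show ?thesis using simple unfolding f'_def by (simp add: cong_dvd_iff)
  qed
  define P where "P n s \<longleftrightarrow> [f n s = 0] (mod q ^ n) \<and> [s = r] (mod q)" for n s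
  have step: "\<exists>s'. P (Suc n) s' \<and> [s' = s] (mod q ^ n)" if "P n s" for n s
  proof (cases "n = 0")
    case True
    then show ?thesis using root by (auto simp: P_def f_def)
  next
    case False
    then have "n \<ge> 1" by simp
    have "[f (Suc n) s = f n s] (mod q ^ n)" by (rule f_cong) simp
    then have root_n: "[f (Suc n) s = 0] (mod q ^ n)"
      using \<open>P n s\<close> unfolding P_def by (blast intro: cong_trans)
    have simple_Suc: "\<not> q dvd f' (Suc n) s"
      using simple_n \<open>P n s\<close> unfolding P_def by simp
    obtain s' where s': "[s' = s] (mod q ^ n)" "[f (Suc n) s' = 0] (mod q ^ Suc n)"
      unfolding f_def
      by (rule quadratic_root_lift_int[OF \<open>prime q\<close> \<open>n \<ge> 1\<close> root_n[unfolded f_def]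
            simple_Suc[unfolded f'_def]])
    have "[s' = r] (mod q)"
      using cong_pow_imp_cong[OF s'(1) \<open>n \<ge> 1\<close>] \<open>P n s\<close> unfolding P_def
      by (blast intro: cong_trans)
    then show ?thesis using s' unfolding P_def by blast
  qed
  have "P 0 r" by (simp add: P_def)
  then obtain g where "\<And>n. P n (g n)" "\<And>n. [g (Suc n) = g n] (mod q ^ n)"
    using dependent_nat_choice[of P "\<lambda>n s s'. [s' = s] (mod q ^ n)"] step by blast
  then show thesis using that unfolding P_def f_def by blast
qed

lemma padic_hensel_quadratic:
  fixes A B C r :: "'p::card2 padic_int"
  assumes prime: "prime CARD('p)"
    and root: "of_nat CARD('p) dvd A * r * r + B * r + C"
    and simple: "\<not> of_nat CARD('p) dvd 2 * A * r + B"
  obtains w where "A * w * w + B * w + C = 0" and "of_nat CARD('p) dvd w - r"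
proof -
  let ?q = "int CARD('p)"
  let ?r = "residue r 1"
  have "?q dvd residue (A * r * r + B * r + C) 1"
    using root p_dvd_iff_dvd_residue[of 1 "A * r * r + B * r + C"] by simp
  then have root1: "[residue A 1 * ?r * ?r + residue B 1 * ?r + residue C 1 = 0] (mod ?q)"
    using residue_quadratic_cong[of A r B C 1] by (simp add: cong_0_iff cong_dvd_iff)
  have "\<not> ?q dvd residue (2 * A * r + B) 1"
    using simple p_dvd_iff_dvd_residue[of 1 "2 * A * r + B"] by simp
  then have simple1: "\<not> ?q dvd 2 * residue A 1 * ?r + residue B 1"
    using residue_linear_cong[of A r B 1] by (simp add: cong_dvd_iff)
  have "prime ?q" using prime by simp
  then obtain g where
    g: "\<And>n. [residue A n * g n * g n + residue B n * g n + residue C n = 0] (mod ?q ^ n)"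
      "\<And>n. [g (Suc n) = g n] (mod ?q ^ n)" "[g 1 = ?r] (mod ?q)"
    using quadratic_coherent_roots_int[where A = "residue A" and B = "residue B" and C = "residue C",
        OF _ _ root1 simple1] residue_cong_lower by blast
  obtain w :: "'p padic_int" where w: "\<And>n. [residue w n = g n] (mod ?q ^ n)"
    using padic_int_limit g(2) by blast
  have "A * w * w + B * w + C = 0"
  proof (rule padic_int_eqI)
    fix n
    let ?f = "\<lambda>s. residue A n * s * s + residue B n * s + residue C n"
    have "[residue (A * w * w + B * w + C) n = ?f (residue w n)] (mod ?q ^ n)"
      by (rule residue_quadratic_cong)
    also have "[?f (residue w n) = ?f (g n)] (mod ?q ^ n)"
      using w by (intro cong_add cong_mult cong_refl)
    also have "[?f (g n) = 0] (mod ?q ^ n)" by (rule g(1))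
    finally show "residue (A * w * w + B * w + C) n = residue 0 n"
      by (simp only: residue_zero residue_eq_0_iff_cong)
  qed
  moreover have "of_nat CARD('p) dvd w - r"
  proof -
    have "[residue (w - r) 1 = residue w 1 - ?r] (mod ?q)"
      by (simp add: cong_def residue_ops mod_simps)
    also have "[residue w 1 - ?r = g 1 - ?r] (mod ?q)"
      using w[of 1] by (intro cong_diff cong_refl) simp
    also have "[g 1 - ?r = 0] (mod ?q)"
      using g(3) by (simp add: cong_iff_dvd_diff)
    finally show ?thesis using p_dvd_iff_dvd_residue[of 1 "w - r"] by (simp add: cong_0_iff)
  qed
  ultimately show thesis using that by blast
qed

section \<open>Units and cancellation in \<open>\<int>\<^sub>p\<close>\<close>

lemma not_dvd_if_dvd_diff:
  assumes "a dvd x - y" and "\<not> a dvd y"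
  shows "\<not> a dvd (x::'a::comm_ring_1)"
proof
  assume "a dvd x"
  then have "a dvd x - (x - y)" using assms(1) by (rule dvd_diff)
  then show False using assms(2) by simp
qed

lemma not_dvd_add_mult: "\<not> a dvd x \<Longrightarrow> \<not> a dvd x + a * (y::'a::comm_ring_1)"
  by (simp add: dvd_add_left_iff)

lemma p_not_dvd_1: "\<not> of_nat CARD('p) dvd (1::'p::card2 padic_int)"
  using int_card_ge_2[where 'p='p] by (simp add: p_dvd_iff_residue residue_ops)

lemma padic_unit_iff:
  assumes prime: "prime CARD('p)"
  shows "(x::'p::card2 padic_int) dvd 1 \<longleftrightarrow> \<not> of_nat CARD('p) dvd x"
proof
  assume "x dvd 1"
  then show "\<not> of_nat CARD('p) dvd x" using p_not_dvd_1 dvd_trans by blast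
next
  let ?q = "int CARD('p)"
  assume "\<not> of_nat CARD('p) dvd x"
  then have "\<not> ?q dvd residue x 1" using p_dvd_iff_dvd_residue[of 1 x] by simp
  then have "coprime (residue x 1) ?q"
    using prime by (simp add: prime_imp_coprime coprime_commute)
  then obtain e where "[residue x 1 * e = 1] (mod ?q)"
    using cong_solve_coprime_int by blast
  moreover have "[residue (x * of_int e - 1) n = residue x n * e - 1] (mod ?q ^ n)" for n
    by (simp add: cong_def residue_ops mod_simps)
  ultimately have "?q dvd residue (x * of_int e - 1) 1"
    using cong_dvd_iff cong_iff_dvd_diff power_one_right by metis
  \<comment> \<open>Hensel's lemma for the linear polynomial \<open>x w - 1\<close>\<close>
  then have "of_nat CARD('p) dvd 0 * of_int e * of_int e + x * of_int e + - 1"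
    using p_dvd_iff_dvd_residue[of 1 "x * of_int e - 1"] by simp
  moreover have "\<not> of_nat CARD('p) dvd 2 * 0 * of_int e + x"
    using \<open>\<not> of_nat CARD('p) dvd x\<close> by simp
  ultimately obtain w where "0 * w * w + x * w + - 1 = 0"
    using padic_hensel_quadratic[OF prime] by blast
  then have "1 = x * w" by simp
  then show "x dvd 1" ..
qed

lemma padic_pow_nonzero: "(of_nat CARD('p) :: 'p::card2 padic_int) ^ k \<noteq> 0"
  by (metis of_nat_eq_0_iff of_nat_power power_not_zero zero_less_card_finite less_irrefl)

lemma padic_int_unit_decomposition:
  assumes prime: "prime CARD('p)" and "(x::'p::card2 padic_int) \<noteq> 0"
  obtains k u where "x = of_nat CARD('p) ^ k * u" and "u dvd 1"
proof -
  let ?P = "of_nat CARD('p) :: 'p padic_int"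
  obtain n where "residue x n \<noteq> 0"
    using \<open>x \<noteq> 0\<close> padic_int_eqI[of x 0] by auto
  moreover have "?P ^ n dvd ?P ^ Suc n" by (simp add: le_imp_power_dvd)
  ultimately have "\<not> ?P ^ Suc n dvd x"
    using pow_dvd_iff_residue[of n x] dvd_trans by blast
  then have ex: "\<exists>k. \<not> ?P ^ Suc k dvd x" by blast
  \<comment> \<open>the \<open>p\<close>-adic valuation of \<open>x\<close>\<close>
  define k where "k = (LEAST k. \<not> ?P ^ Suc k dvd x)"
  have not_dvd: "\<not> ?P ^ Suc k dvd x"
    unfolding k_def by (rule LeastI_ex[OF ex])
  have "?P ^ k dvd x"
  proof (cases k)
    case (Suc j)
    then have "j < (LEAST k. \<not> ?P ^ Suc k dvd x)" by (simp add: k_def)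
    then have "\<not> \<not> ?P ^ Suc j dvd x" by (rule not_less_Least)
    then show ?thesis using Suc by simp
  qed simp
  then obtain u where u: "x = ?P ^ k * u" ..
  have "\<not> ?P dvd u"
  proof
    assume "?P dvd u"
    then have "?P ^ Suc k dvd x"
      unfolding power_Suc2 u by (rule mult_dvd_mono[OF dvd_refl])
    then show False using not_dvd by contradiction
  qed
  then show thesis using that u padic_unit_iff[OF prime] by blast
qed

lemma padic_mult_eq_0_iff:
  assumes prime: "prime CARD('p)"
  shows "(x::'p::card2 padic_int) * y = 0 \<longleftrightarrow> x = 0 \<or> y = 0"
proof (intro iffI; (elim disjE)?)
  assume "x * y = 0"
  show "x = 0 \<or> y = 0"
  proof (rule ccontr)
    assume "\<not> (x = 0 \<or> y = 0)"
    then obtain a u b v where "x = of_nat CARD('p) ^ a * u" "u dvd 1"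
      "y = of_nat CARD('p) ^ b * v" "v dvd 1"
      using padic_int_unit_decomposition[OF prime] by metis
    then have zero: "of_nat CARD('p) ^ (a + b) * (u * v) = (0::'p padic_int)"
      using \<open>x * y = 0\<close> by (simp add: power_add algebra_simps)
    have "u * v dvd 1" using \<open>u dvd 1\<close> \<open>v dvd 1\<close> by simp
    then obtain w where "1 = u * v * w" ..
    with zero have "of_nat CARD('p) ^ (a + b) = (0::'p padic_int)"
      by (metis mult.assoc mult_1_right mult_zero_left)
    then show False using padic_pow_nonzero by blast
  qed
qed simp_all

lemma padic_mult_left_cancel:
  assumes "prime CARD('p)" and "(a::'p::card2 padic_int) \<noteq> 0"
  shows "a * b = a * c \<longleftrightarrow> b = c"
proof -
  have "a * b = a * c \<longleftrightarrow> a * (b - c) = 0" by (simp add: right_diff_distrib)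
  also have "\<dots> \<longleftrightarrow> b = c"
    by (simp only: padic_mult_eq_0_iff[OF assms(1)] assms(2) right_minus_eq simp_thms)
  finally show ?thesis .
qed

lemma padic_dvd_mult_cancel_left:
  assumes "prime CARD('p)" and "(c::'p::card2 padic_int) \<noteq> 0" and "c * a dvd c * b"
  shows "a dvd b"
proof -
  obtain k where "c * b = c * a * k" using assms(3) ..
  then have "b = a * k" using padic_mult_left_cancel[OF assms(1,2)] by (simp add: mult.assoc)
  then show ?thesis ..
qed

lemma padic_unit_square:
  assumes prime: "prime CARD('p)" and odd: "odd CARD('p)"
    and "of_nat CARD('p) dvd (w::'p::card2 padic_int) - 1"
  obtains s where "s dvd 1" and "w = s ^ 2"
proof -
  let ?P = "of_nat CARD('p) :: 'p padic_int"
  have "1 * 1 * 1 + 0 * 1 + - w = - (w - 1)" by simp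
  then have "?P dvd 1 * 1 * 1 + 0 * 1 + - w"
    using \<open>?P dvd w - 1\<close> by (simp only: dvd_minus_iff)
  moreover have "\<not> ?P dvd 2 * 1 * 1 + 0"
  proof -
    have "2 < CARD('p)" using odd two_le_card[where 'a='p] by (cases "CARD('p) = 2") auto
    then show ?thesis by (simp add: p_dvd_iff_residue)
  qed
  ultimately obtain s where s: "1 * s * s + 0 * s + - w = 0" "?P dvd s - 1"
    using padic_hensel_quadratic[OF prime] by blast
  have "\<not> ?P dvd s"
  proof
    assume "?P dvd s"
    then have "?P dvd s - (s - 1)" using s(2) by (rule dvd_diff)
    then show False using p_not_dvd_1[where 'p='p] by simp
  qed
  then have "s dvd 1" using padic_unit_iff[OF prime] by blast
  moreover have "w = s ^ 2" using s(1) by (simp add: power2_eq_square)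
  ultimately show thesis by (rule that)
qed

section \<open>Symmetric \<open>1 \<times> 1\<close> and \<open>2 \<times> 2\<close> matrices\<close>

lemma mat1_carrier [simp]: "mat1 a \<in> carrier_mat 1 1"
  and mat1_dim [simp]: "dim_row (mat1 a) = 1" "dim_col (mat1 a) = 1"
  and mat1_index [simp]: "mat1 a $$ (0, 0) = a"
  unfolding mat1_def by auto

lemma mat2_carrier [simp]: "mat2 a b c \<in> carrier_mat 2 2"
  and mat2_dim [simp]: "dim_row (mat2 a b c) = 2" "dim_col (mat2 a b c) = 2"
  and mat2_index [simp]: "mat2 a b c $$ (0, 0) = a" "mat2 a b c $$ (0, 1) = b"
    "mat2 a b c $$ (1, 0) = b" "mat2 a b c $$ (1, 1) = c"
    "mat2 a b c $$ (0, Suc 0) = b" "mat2 a b c $$ (Suc 0, 0) = b" "mat2 a b c $$ (Suc 0, Suc 0) = c"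
  unfolding mat2_def by auto

lemma less_2_cases: "(i::nat) < 2 \<Longrightarrow> i = 0 \<or> i = 1"
  by auto

lemma mat1_eq_iff [simp]: "mat1 a = mat1 a' \<longleftrightarrow> a = a'"
  by (metis mat1_index)

lemma mat2_eq_iff [simp]: "mat2 a b c = mat2 a' b' c' \<longleftrightarrow> a = a' \<and> b = b' \<and> c = c'"
  by (metis mat2_index(1,2,4))

lemma mat1_neq_mat2 [simp]: "mat1 a \<noteq> mat2 a' b' c'" "mat2 a' b' c' \<noteq> mat1 a"
  using mat1_dim(1)[of a] mat2_dim(1)[of a' b' c'] by fastforce+

lemma carrier_mat_1_eq_mat1: "A \<in> carrier_mat 1 1 \<Longrightarrow> A = mat1 (A $$ (0, 0))"
  by (rule eq_matI) (auto simp: mat1_def)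

lemma symmetric_mat_eq_mat2:
  assumes "A \<in> carrier_mat 2 2" and "symmetric_mat A"
  shows "A = mat2 (A $$ (0, 0)) (A $$ (0, 1)) (A $$ (1, 1))"
proof -
  have "A $$ (1, 0) = A $$ (0, 1)"
    using assms index_transpose_mat(1)[of 1 A 0] unfolding symmetric_mat_def by auto
  then show ?thesis
    by (intro eq_matI) (use assms in \<open>auto simp: mat2_def dest!: less_2_cases\<close>)
qed

lemma smult_mat2: "k \<cdot>\<^sub>m mat2 a b c = mat2 (k * a) (k * b) (k * c)"
  by (rule eq_matI) (auto simp: mat2_def)

lemma det_mat1 [simp]: "det (mat1 a) = (a :: 'a::comm_ring_1)"
  using det_single[OF mat1_carrier] by simp

lemma cofactor_mat1: "cofactor (mat1 a) 0 0 = 1"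
  unfolding cofactor_def by (simp add: mat_delete_def)

lemma det_mat2 [simp]: "det (mat2 a b c) = a * c - b * (b :: 'a::comm_ring_1)"
proof -
  have "det (mat2 a b c) = (\<Sum>i<2. mat2 a b c $$ (i, 0) * cofactor (mat2 a b c) i 0)"
    by (rule laplace_expansion_column[OF mat2_carrier]) simp
  also have "\<dots> = a * cofactor (mat2 a b c) 0 0 + b * cofactor (mat2 a b c) 1 0"
    by (simp add: numeral_2_eq_2)
  also have "cofactor (mat2 a b c) 0 0 = c"
    unfolding cofactor_def by (subst det_single) (auto simp: mat_delete_def)
  also have "cofactor (mat2 a b c) 1 0 = - b"
    unfolding cofactor_def by (subst det_single) (auto simp: mat_delete_def)
  finally show ?thesis by (simp add: algebra_simps)
qed

lemma adj_mat1: "adj_mat (mat1 (a::'a::comm_ring_1)) = mat1 1"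
  by (rule eq_matI) (auto simp: adj_mat_def cofactor_mat1)

lemma adj_mat2: "adj_mat (mat2 a b (c::'a::comm_ring_1)) = mat2 c (- b) a"
  by (rule eq_matI)
    (auto simp: adj_mat_def cofactor_def det_single mat_delete_def dest!: less_2_cases)

lemma mat_inv_diff_integral_mat1_iff:
  "mat_inv_diff_integral (mat1 a) (mat1 b) \<longleftrightarrow> inv_diff_integral a (b::'a::comm_ring_1)"
  by (simp add: mat_inv_diff_integral_def inv_diff_integral_def adj_mat1)

lemma mat_inv_diff_integral_mat2_iff:
  fixes a0 b0 c0 a b c :: "'a::comm_ring_1"
  defines "\<delta> \<equiv> a0 * c0 - b0 * b0" and "D \<equiv> a * c - b * b"
  shows "mat_inv_diff_integral (mat2 a0 b0 c0) (mat2 a b c) \<longleftrightarrow>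
    \<delta> * D dvd D * a0 - \<delta> * a \<and> \<delta> * D dvd D * b0 - \<delta> * b \<and> \<delta> * D dvd D * c0 - \<delta> * c"
proof -
  have all_less_2: "(\<forall>i<2. P i) \<longleftrightarrow> P 0 \<and> P 1" for P :: "nat \<Rightarrow> bool"
    using less_2_cases by fastforce
  have neg: "D * - b0 - \<delta> * - b = - (D * b0 - \<delta> * b)" by (simp add: algebra_simps)
  show ?thesis
    unfolding mat_inv_diff_integral_def mat2_dim all_less_2 adj_mat2 mat2_index det_mat2
      \<delta>_def[symmetric] D_def[symmetric] neg dvd_minus_iff
    by blast
qed

section \<open>Congruence of matrices\<close>

lemma inverse_mat_carrier:
  assumes "A \<in> carrier_mat n n" and "inverts_mat A A'" and "inverts_mat A' A"
  shows "A' \<in> carrier_mat n n"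
proof -
  have "dim_col A' = n" using arg_cong[OF assms(2)[unfolded inverts_mat_def], of dim_col] assms(1) by simp
  moreover have "dim_row A' = n" using arg_cong[OF assms(3)[unfolded inverts_mat_def], of dim_col] assms(1) by simp
  ultimately show ?thesis by auto
qed

lemma invertible_mat_mult:
  assumes A: "A \<in> carrier_mat n n" and B: "B \<in> carrier_mat n n"
    and "invertible_mat A" and "invertible_mat B"
  shows "invertible_mat (A * B)"
proof -
  obtain A' where A': "inverts_mat A A'" "inverts_mat A' A"
    using \<open>invertible_mat A\<close> unfolding invertible_mat_def by blast
  obtain B' where B': "inverts_mat B B'" "inverts_mat B' B"
    using \<open>invertible_mat B\<close> unfolding invertible_mat_def by blast
  have A'_carrier: "A' \<in> carrier_mat n n" by (rule inverse_mat_carrier[OF A A'])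
  have B'_carrier: "B' \<in> carrier_mat n n" by (rule inverse_mat_carrier[OF B B'])
  note assoc = assoc_mult_mat[of _ n n _ n _ n]
  have "A * B * (B' * A') = A * (B * B') * A'"
    using A B A'_carrier B'_carrier by (simp add: assoc)
  also have "\<dots> = 1\<^sub>m n" using A' B' A B A'_carrier unfolding inverts_mat_def by simp
  finally have "inverts_mat (A * B) (B' * A')" using A unfolding inverts_mat_def by simp
  moreover have "B' * A' * (A * B) = B' * (A' * A) * B"
    using A B A'_carrier B'_carrier by (simp add: assoc)
  then have "inverts_mat (B' * A') (A * B)"
    using A' B' A B A'_carrier B'_carrier unfolding inverts_mat_def by simp
  ultimately show ?thesis using A B unfolding invertible_mat_def by auto
qed

lemma mat_congruent_trans:
  assumes "mat_congruent A B" and "mat_congruent B C" and A: "A \<in> carrier_mat n n"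
  shows "mat_congruent A C"
proof -
  obtain U where U: "U \<in> carrier_mat n n" "invertible_mat U" "B = U * A * U\<^sup>T"
    using assms(1) A unfolding mat_congruent_def by auto
  then have "B \<in> carrier_mat n n" using A by auto
  then obtain V where V: "V \<in> carrier_mat n n" "invertible_mat V" "C = V * B * V\<^sup>T"
    using assms(2) unfolding mat_congruent_def by auto
  have "C = V * U * A * (V * U)\<^sup>T"
    using U V A by (simp add: transpose_mult[OF V(1) U(1)] assoc_mult_mat[of _ n n _ n _ n])
  moreover have "invertible_mat (V * U)" using V U by (intro invertible_mat_mult) auto
  moreover have "V * U \<in> carrier_mat n n" "dim_row A = n" using U V A by auto
  ultimately show ?thesis unfolding mat_congruent_def by metis
qed

lemma mat_congruent_smult:
  assumes "mat_congruent A B" and A: "A \<in> carrier_mat n n"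
  shows "mat_congruent (k \<cdot>\<^sub>m A) (k \<cdot>\<^sub>m B)"
proof -
  obtain U where U: "U \<in> carrier_mat n n" "invertible_mat U" "B = U * A * U\<^sup>T"
    using assms unfolding mat_congruent_def by auto
  then have "k \<cdot>\<^sub>m B = U * (k \<cdot>\<^sub>m A) * U\<^sup>T"
    using A by (simp add: mult_smult_distrib[of _ n n] mult_smult_assoc_mat[of _ n n])
  then show ?thesis using U A unfolding mat_congruent_def by auto
qed

lemma mat_congruent_mat1:
  assumes "(s::'a::comm_ring_1) dvd 1"
  shows "mat_congruent (mat1 a) (mat1 (s ^ 2 * a))"
proof -
  obtain t where "1 = s * t" using assms ..
  then have "invertible_mat (mat1 s)"
    unfolding invertible_mat_def inverts_mat_def
    by (intro conjI exI[of _ "mat1 t"]) (auto simp: mat1_def scalar_prod_def ac_simps)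
  moreover have "mat1 (s ^ 2 * a) = mat1 s * mat1 a * (mat1 s)\<^sup>T"
    by (rule eq_matI) (auto simp: mat1_def scalar_prod_def power2_eq_square ac_simps)
  ultimately show ?thesis unfolding mat_congruent_def mat1_dim by (metis mat1_carrier)
qed

definition mat2x2 :: "'a \<Rightarrow> 'a \<Rightarrow> 'a \<Rightarrow> 'a \<Rightarrow> 'a mat" where
  "mat2x2 p q r s = mat 2 2 (\<lambda>(i, j). if i = 0 then (if j = 0 then p else q) else (if j = 0 then r else s))"

lemma mat2x2_carrier: "mat2x2 p q r s \<in> carrier_mat 2 2"
  by (simp add: mat2x2_def)

lemma mat2x2_mult:
  "mat2x2 p q r s * mat2x2 p' q' r' s' =
     mat2x2 (p * p' + q * r') (p * q' + q * s') (r * p' + s * r') (r * q' + s * s')"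
  by (rule eq_matI) (auto simp: mat2x2_def scalar_prod_def numeral_2_eq_2 dest!: less_2_cases)

lemma invertible_mat2x2:
  assumes "p * s - q * r dvd (1::'a::comm_ring_1)"
  shows "invertible_mat (mat2x2 p q r s)"
proof -
  obtain i where i: "1 = (p * s - q * r) * i" using assms ..
  have one: "1\<^sub>m 2 = mat2x2 1 0 0 (1::'a)"
    by (rule eq_matI) (auto simp: mat2x2_def dest!: less_2_cases)
  let ?B = "mat2x2 (s * i) (- q * i) (- r * i) (p * i)"
  let ?D = "mat2x2 ((p * s - q * r) * i) 0 0 ((p * s - q * r) * i)"
  have "mat2x2 p q r s * ?B = ?D" "?B * mat2x2 p q r s = ?D"
    unfolding mat2x2_mult by (simp_all add: algebra_simps)
  moreover have "?D = 1\<^sub>m 2" unfolding i[symmetric] one ..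
  ultimately show ?thesis
    unfolding invertible_mat_def inverts_mat_def by (auto simp: mat2x2_def)
qed

lemma mat_congruent_mat2I:
  fixes p q r s a b c :: "'a::comm_ring_1"
  assumes "p * s - q * r dvd 1"
    and "a' = p * p * a + 2 * p * q * b + q * q * c"
    and "b' = p * r * a + (p * s + q * r) * b + q * s * c"
    and "c' = r * r * a + 2 * r * s * b + s * s * c"
  shows "mat_congruent (mat2 a b c) (mat2 a' b' c')"
proof -
  have mat2: "mat2 a b c = mat2x2 a b b c" for a b c :: 'a
    by (rule eq_matI) (auto simp: mat2x2_def mat2_def dest!: less_2_cases)
  have transpose: "(mat2x2 p q r s)\<^sup>T = mat2x2 p r q s"
    by (rule eq_matI) (auto simp: mat2x2_def dest!: less_2_cases)
  have "mat2x2 p q r s * mat2 a b c * (mat2x2 p q r s)\<^sup>T = mat2 a' b' c'"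
    unfolding mat2 transpose mat2x2_mult assms(2-4) by (simp add: algebra_simps mult_2)
  then show ?thesis
    using mat2x2_carrier invertible_mat2x2[OF assms(1)] unfolding mat_congruent_def by force
qed

section \<open>Integrality of the difference of inverses\<close>

lemma inv_diff_integral_scaled:
  fixes t h \<beta> :: "'p::card2 padic_int"
  assumes prime: "prime CARD('p)" and "t \<noteq> 0" and "inv_diff_integral (t * h) \<beta>"
  obtains b where "\<beta> = t * b" and "t dvd b - h"
proof -
  obtain k where k: "\<beta> - t * h = t * h * \<beta> * k"
    using assms(3) unfolding inv_diff_integral_def ..
  define b where "b = h + h * \<beta> * k"
  have \<beta>: "\<beta> = t * b" using k unfolding b_def by (simp add: algebra_simps)
  have "t * (b - h) = t * (t * (h * b * k))"
    using k unfolding \<beta> by (simp add: algebra_simps)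
  then have "b - h = t * (h * b * k)"
    using padic_mult_left_cancel[OF prime \<open>t \<noteq> 0\<close>] by blast
  then show thesis using that \<beta> by (metis dvd_triv_left)
qed

lemma inv_diff_integral_unit_square:
  fixes \<alpha> \<alpha>' :: "'p::card2 padic_int"
  assumes prime: "prime CARD('p)" and odd: "odd CARD('p)"
    and "\<alpha> \<noteq> 0" and "of_nat CARD('p) dvd \<alpha>" and "inv_diff_integral \<alpha> \<alpha>'"
  obtains u where "u dvd 1" and "\<alpha>' = \<alpha> * u ^ 2"
proof -
  let ?P = "of_nat CARD('p) :: 'p padic_int"
  obtain a v where \<alpha>: "\<alpha> = ?P ^ a * v" and "v dvd 1"
    using padic_int_unit_decomposition[OF prime \<open>\<alpha> \<noteq> 0\<close>] by blast
  have "a \<noteq> 0"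
  proof
    assume "a = 0"
    then have "?P dvd v" using \<open>?P dvd \<alpha>\<close> unfolding \<alpha> by simp
    then show False using \<open>v dvd 1\<close> padic_unit_iff[OF prime] by blast
  qed
  obtain b where b: "\<alpha>' = ?P ^ a * b" and "?P ^ a dvd b - v"
    using inv_diff_integral_scaled[OF prime padic_pow_nonzero] \<open>inv_diff_integral \<alpha> \<alpha>'\<close>
    unfolding \<alpha> by blast
  moreover have "?P dvd ?P ^ a" using \<open>a \<noteq> 0\<close> by simp
  ultimately have "?P dvd b - v" using dvd_trans by blast
  obtain vi where vi: "1 = v * vi" using \<open>v dvd 1\<close> ..
  have "b * vi - 1 = (b - v) * vi" using vi by (simp add: algebra_simps)
  then have "?P dvd b * vi - 1" using \<open>?P dvd b - v\<close> by simp
  then obtain s where "s dvd 1" and s: "b * vi = s ^ 2"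
    using padic_unit_square[OF prime odd] by blast
  have "\<alpha> * (b * vi) = ?P ^ a * b * (v * vi)" unfolding \<alpha> by (simp add: algebra_simps)
  also have "\<dots> = \<alpha>'" unfolding b vi[symmetric] by simp
  finally show thesis using that \<open>s dvd 1\<close> s by simp
qed

lemma inv_diff_integral_entry_quotient:
  fixes t h D x0 x :: "'p::card2 padic_int"
  assumes prime: "prime CARD('p)" and "t \<noteq> 0"
    and "t * (t * h) * D dvd D * (t * x0) - t * (t * h) * x"
  obtains \<xi> where "t * h * x = D * \<xi>" and "t dvd \<xi> - x0"
proof -
  obtain y where "D * (t * x0) - t * (t * h) * x = t * (t * h) * D * y" using assms(3) ..
  then have "t * (D * x0 - t * h * x) = t * (t * h * D * y)" by (simp add: algebra_simps)
  then have "D * x0 - t * h * x = t * h * D * y"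
    using padic_mult_left_cancel[OF prime \<open>t \<noteq> 0\<close>] by blast
  then have "t * h * x = D * (x0 - t * h * y)" and "t dvd (x0 - t * h * y) - x0"
    by (simp_all add: algebra_simps)
  then show thesis by (rule that)
qed

text \<open>Each entry condition reads \<open>t h x = D \<xi>\<close> with \<open>\<xi> \<equiv> x\<^sub>0 (mod t)\<close>, where \<open>D\<close> is
  the determinant of the second matrix and \<open>t\<^sup>2 h\<close> that of the first. Comparing determinants
  yields \<open>(t h)\<^sup>2 = D e\<close> with \<open>e \<equiv> h (mod t)\<close> a unit, hence \<open>x = t (h/e) \<xi>\<close> with
  \<open>h/e \<equiv> 1 (mod t)\<close>.\<close>
lemma inv_diff_integral_mat2_scaled:
  fixes t a0 b0 c0 a b c :: "'p::card2 padic_int"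
  assumes prime: "prime CARD('p)" and "of_nat CARD('p) dvd t" and "t \<noteq> 0"
    and unimodular: "a0 * c0 - b0 * b0 dvd 1" and D: "a * c - b * b \<noteq> 0"
    and integral: "mat_inv_diff_integral (mat2 (t * a0) (t * b0) (t * c0)) (mat2 a b c)"
  obtains a1 b1 c1 where "a = t * a1" and "b = t * b1" and "c = t * c1"
    and "t dvd a1 - a0" and "t dvd b1 - b0" and "t dvd c1 - c0"
proof -
  define h where "h = a0 * c0 - b0 * b0"
  define D where "D = a * c - b * b"
  have "h \<noteq> 0" using unimodular p_not_dvd_1[where 'p='p] unfolding h_def by auto
  then have th: "t * h \<noteq> 0" using padic_mult_eq_0_iff[OF prime] \<open>t \<noteq> 0\<close> by blast
  have det_M: "t * a0 * (t * c0) - t * b0 * (t * b0) = t * (t * h)" by (simp add: h_def algebra_simps)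
  have div: "t * (t * h) * D dvd D * (t * a0) - t * (t * h) * a"
    "t * (t * h) * D dvd D * (t * b0) - t * (t * h) * b"
    "t * (t * h) * D dvd D * (t * c0) - t * (t * h) * c"
    using integral unfolding mat_inv_diff_integral_mat2_iff det_M D_def[symmetric] by auto
  obtain \<alpha> where \<alpha>: "t * h * a = D * \<alpha>" "t dvd \<alpha> - a0"
    by (rule inv_diff_integral_entry_quotient[OF prime \<open>t \<noteq> 0\<close> div(1)])
  obtain \<beta> where \<beta>: "t * h * b = D * \<beta>" "t dvd \<beta> - b0"
    by (rule inv_diff_integral_entry_quotient[OF prime \<open>t \<noteq> 0\<close> div(2)])
  obtain \<gamma> where \<gamma>: "t * h * c = D * \<gamma>" "t dvd \<gamma> - c0"
    by (rule inv_diff_integral_entry_quotient[OF prime \<open>t \<noteq> 0\<close> div(3)])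
  define e where "e = \<alpha> * \<gamma> - \<beta> * \<beta>"
  have "D * (t * h * (t * h)) = D * (D * e)"
  proof -
    have "D * (t * h * (t * h)) = (t * h * a) * (t * h * c) - (t * h * b) * (t * h * b)"
      by (simp add: D_def algebra_simps)
    also have "\<dots> = D * (D * e)" unfolding \<alpha>(1) \<beta>(1) \<gamma>(1) e_def by (simp add: algebra_simps)
    finally show ?thesis .
  qed
  then have the: "t * h * (t * h) = D * e" using padic_mult_left_cancel[OF prime D[folded D_def]] by blast
  have "e - h = (\<alpha> - a0) * \<gamma> + a0 * (\<gamma> - c0) - (\<beta> - b0) * \<beta> - b0 * (\<beta> - b0)"
    by (simp add: e_def h_def algebra_simps)
  then have "t dvd e - h" using \<alpha>(2) \<beta>(2) \<gamma>(2) by simp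
  then have "of_nat CARD('p) dvd e - h" using \<open>of_nat CARD('p) dvd t\<close> dvd_trans by blast
  moreover have "\<not> of_nat CARD('p) dvd h"
    using unimodular padic_unit_iff[OF prime] unfolding h_def by blast
  ultimately have "\<not> of_nat CARD('p) dvd e" by (rule not_dvd_if_dvd_diff)
  then obtain ei where ei: "1 = e * ei" using padic_unit_iff[OF prime] by blast
  have "D = D * e * ei" using ei by (simp add: mult.assoc)
  then have D_eq: "D = t * h * (t * h * ei)" unfolding the[symmetric] by (simp add: mult.assoc)
  have "t dvd h * ei - 1"
  proof -
    have "h * ei - 1 = - ((e - h) * ei)" using ei by (simp add: algebra_simps)
    then show ?thesis using \<open>t dvd e - h\<close> by simp
  qed
  have scaled: "x = t * (h * ei * \<xi>) \<and> t dvd h * ei * \<xi> - x0"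
    if quot: "t * h * x = D * \<xi>" "t dvd \<xi> - x0" for x \<xi> x0
  proof
    have "t * h * x = t * h * (t * (h * ei * \<xi>))" using quot(1) unfolding D_eq by (simp add: ac_simps)
    then show "x = t * (h * ei * \<xi>)" using padic_mult_left_cancel[OF prime th] by blast
    have "h * ei * \<xi> - x0 = (h * ei - 1) * \<xi> + (\<xi> - x0)" by (simp add: algebra_simps)
    then show "t dvd h * ei * \<xi> - x0"
      using \<open>t dvd h * ei - 1\<close> quot(2) by (metis dvd_add dvd_mult2)
  qed
  show thesis using that scaled[OF \<alpha>] scaled[OF \<beta>] scaled[OF \<gamma>] by blast
qed

section \<open>2-adic integers and binary forms\<close>

lemma prime_card_2: "prime CARD(2)"
  by simp

lemma two_adic_unit_iff: "(x::2 padic_int) dvd 1 \<longleftrightarrow> \<not> 2 dvd x"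
  using padic_unit_iff[OF prime_card_2, of x] by simp

lemma two_adic_not_dvd_1: "\<not> 2 dvd (1::2 padic_int)"
  using p_not_dvd_1[where 'p=2] by simp

lemma two_adic_odd_iff: "\<not> 2 dvd (x::2 padic_int) \<longleftrightarrow> 2 dvd x - 1"
proof -
  have "residue x 1 = 0 \<or> residue x 1 = 1" using residue_bounds[of x 1] by auto
  moreover have "residue (x - 1) 1 = (residue x 1 - 1) mod 2" by (simp add: residue_ops)
  ultimately show ?thesis using p_dvd_iff_residue[of x] p_dvd_iff_residue[of "x - 1"] by auto
qed

lemma two_adic_odd_add_odd:
  assumes "\<not> 2 dvd (x::2 padic_int)" and "\<not> 2 dvd y"
  shows "2 dvd x + y"
proof -
  have "x + y = (x - 1) + (y - 1) + 2" by simp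
  then show ?thesis using assms two_adic_odd_iff by (metis dvd_add dvd_refl)
qed

lemma two_adic_odd_mult:
  "\<not> 2 dvd (x::2 padic_int) \<Longrightarrow> \<not> 2 dvd y \<Longrightarrow> \<not> 2 dvd x * y"
  by (simp flip: two_adic_unit_iff)

lemma two_pow_dvd_of_int_iff: "(2::2 padic_int) ^ k dvd of_int a \<longleftrightarrow> 2 ^ k dvd a"
  using pow_dvd_iff_residue[of k "of_int a :: 2 padic_int"] by (simp add: dvd_eq_mod_eq_0)

lemma two_adic_odd_residue_mod_8:
  assumes "\<not> 2 dvd (x::2 padic_int)"
  obtains c :: int where "c \<in> {1, 3, 5, 7}" and "8 dvd x - of_int c"
proof -
  define c where "c = residue x 3"
  have "c mod 2 = residue x 1" unfolding c_def using residue_mod_pow[of 1 3 x] by simp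
  moreover have "residue x 1 \<noteq> 0" using assms p_dvd_iff_residue[of x] by simp
  moreover have "residue x 1 < 2" using residue_bounds(2)[of x 1] by simp
  moreover have "0 \<le> c" "c < 8" unfolding c_def using residue_bounds[of x 3] by simp_all
  ultimately have c: "c \<in> {1, 3, 5, 7}" by (auto, presburger)
  have "residue (x - of_int c) 3 = 0" by (simp add: residue_ops c_def)
  then have "8 dvd x - of_int c" using pow_dvd_iff_residue[of 3 "x - of_int c"] by simp
  with c show thesis by (rule that)
qed

lemma two_adic_square_class:
  assumes "\<not> 2 dvd (y::2 padic_int)" and "8 dvd x - y"
  obtains s where "s dvd 1" and "x = s ^ 2 * y"
proof -
  obtain yi where yi: "1 = y * yi" using assms(1) two_adic_unit_iff by blast
  have "x * yi - 1 = (x - y) * yi" using yi by (simp add: algebra_simps)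
  then obtain k where k: "x * yi = 1 + 8 * k"
    using \<open>8 dvd x - y\<close> by (metis dvd_mult2 dvdE diff_eq_eq add.commute)
  have root: "of_nat CARD(2) dvd 1 * 0 * 0 + (- 1) * 0 + (- 2 * k)" by simp
  have simple: "\<not> of_nat CARD(2) dvd 2 * 1 * 0 + (- 1 :: 2 padic_int)"
    using two_adic_not_dvd_1 by simp
  obtain t where t: "1 * t * t + (- 1) * t + (- 2 * k) = 0"
    using padic_hensel_quadratic[OF prime_card_2 root simple] by blast
  define s where "s = 2 * t - 1"
  have "s ^ 2 = 4 * (1 * t * t + (- 1) * t + (- 2 * k)) + (1 + 8 * k)"
    unfolding s_def by (simp add: algebra_simps power2_eq_square)
  also have "\<dots> = x * yi" unfolding t k by simp
  finally have "s ^ 2 = x * yi" .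
  then have "x = s ^ 2 * y" using yi by (metis mult.assoc mult.commute mult_1_right)
  moreover have "s dvd 1"
    unfolding two_adic_unit_iff s_def using not_dvd_add_mult[of 2 "- 1" t] two_adic_not_dvd_1 by simp
  ultimately show thesis using that by blast
qed

text \<open>The change of basis \<open>(e\<^sub>1, e\<^sub>2) \<mapsto> (p e\<^sub>1 + e\<^sub>2, e\<^sub>1)\<close>.\<close>
lemma mat_congruent_mat2_shift:
  fixes x e z p :: "'a::comm_ring_1"
  shows "mat_congruent (mat2 (2 * x) e (2 * z)) (mat2 (2 * (x * p * p + e * p + z)) (2 * x * p + e) (2 * x))"
  by (rule mat_congruent_mat2I[where p = p and q = 1 and r = 1 and s = 0]) (simp_all add: algebra_simps)

lemma mat_congruent_hyperbolic_plane:
  assumes "(b::'a::comm_ring_1) dvd 1"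
  shows "mat_congruent (mat2 0 b (2 * z)) (mat2 0 1 0)"
proof -
  obtain bi where bi: "1 = b * bi" using assms ..
  have "bi * (- z * bi) * 0 + (bi * 1 + 0 * (- z * bi)) * b + 0 * 1 * (2 * z) = b * bi"
    by (simp add: mult.commute)
  moreover have "- z * bi * (- z * bi) * 0 + 2 * (- z * bi) * 1 * b + 1 * 1 * (2 * z) = 2 * z * (1 - b * bi)"
    by (simp add: algebra_simps)
  ultimately show ?thesis
    using bi by (intro mat_congruent_mat2I[where p = bi and q = 0 and r = "- z * bi" and s = 1]) (auto intro: dvdI)
qed

text \<open>In the basis \<open>(e\<^sub>1, r e\<^sub>1 + s e\<^sub>2)\<close> with \<open>s = (1 - 2 r) / g\<close> the off-diagonal entry
  is \<open>1\<close>, and the last diagonal entry is \<open>2\<close> exactly when \<open>r\<close> is a root of the quadratic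
  below, where \<open>\<kappa> = x / g\<^sup>2\<close>.\<close>
lemma two_adic_anisotropic_plane:
  fixes g x :: "2 padic_int"
  assumes "\<not> 2 dvd g" and "\<not> 2 dvd x"
  shows "mat_congruent (mat2 2 g (2 * x)) (mat2 2 1 2)"
proof -
  obtain gi where gi: "1 = g * gi" using assms(1) two_adic_unit_iff by blast
  then have "\<not> 2 dvd gi" using two_adic_unit_iff by (metis dvd_triv_right)
  define \<kappa> where "\<kappa> = x * gi * gi"
  have "\<not> 2 dvd \<kappa>" unfolding \<kappa>_def using assms(2) \<open>\<not> 2 dvd gi\<close> by (simp add: two_adic_odd_mult)
  then have root: "of_nat CARD(2) dvd (4 * \<kappa> - 1) * 0 * 0 + (1 - 4 * \<kappa>) * 0 + (\<kappa> - 1)"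
    using two_adic_odd_iff by simp
  have simple: "\<not> of_nat CARD(2) dvd 2 * (4 * \<kappa> - 1) * 0 + (1 - 4 * \<kappa>)"
    using not_dvd_add_mult[OF two_adic_not_dvd_1, where y = "- 2 * \<kappa>"] by simp
  obtain r where r: "(4 * \<kappa> - 1) * r * r + (1 - 4 * \<kappa>) * r + (\<kappa> - 1) = 0"
    using padic_hensel_quadratic[OF prime_card_2 root simple] by blast
  define s where "s = (1 - 2 * r) * gi"
  have "\<not> 2 dvd 1 - 2 * r"
    using not_dvd_add_mult[OF two_adic_not_dvd_1, where y = "- r"] by simp
  then have "s dvd 1" unfolding s_def two_adic_unit_iff using \<open>\<not> 2 dvd gi\<close> by (rule two_adic_odd_mult)
  have "s * g = (1 - 2 * r) * (g * gi)" unfolding s_def by (simp add: ac_simps)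
  then have sg: "s * g = 1 - 2 * r" unfolding gi[symmetric] by simp
  have ssx: "s * s * x = (1 - 2 * r) * (1 - 2 * r) * \<kappa>" unfolding s_def \<kappa>_def by (simp add: algebra_simps)
  have "r * r * 2 + 2 * r * s * g + s * s * (2 * x) = 2 * r * r + 2 * r * (s * g) + 2 * (s * s * x)"
    by (simp add: algebra_simps)
  also have "\<dots> = 2 * ((4 * \<kappa> - 1) * r * r + (1 - 4 * \<kappa>) * r + (\<kappa> - 1)) + 2"
    unfolding sg ssx by (simp add: algebra_simps)
  finally have c: "r * r * 2 + 2 * r * s * g + s * s * (2 * x) = 2" unfolding r by simp
  have b: "1 * r * 2 + (1 * s + 0 * r) * g + 0 * s * (2 * x) = 1"
    using sg by (simp add: algebra_simps)
  show ?thesis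
    by (rule mat_congruent_mat2I[where p = 1 and q = 0 and r = r and s = s])
      (use \<open>s dvd 1\<close> b c in simp_all)
qed

lemma two_adic_even_form_hyperbolic:
  fixes x e z :: "2 padic_int"
  assumes e: "\<not> 2 dvd e" and xz: "2 dvd x * z"
  shows "mat_congruent (mat2 (2 * x) e (2 * z)) (mat2 0 1 0)"
proof -
  define r0 :: "2 padic_int" where "r0 = (if 2 dvd z then 0 else 1)"
  have root: "of_nat CARD(2) dvd x * r0 * r0 + e * r0 + z"
  proof (cases "2 dvd z")
    case False
    then have "2 dvd x" using xz two_adic_odd_mult by blast
    moreover have "2 dvd e + z" using e False by (rule two_adic_odd_add_odd)
    ultimately show ?thesis by (simp add: r0_def add.assoc)
  qed (simp add: r0_def)
  have simple: "\<not> of_nat CARD(2) dvd 2 * x * r0 + e"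
    using not_dvd_add_mult[OF e, where y = "x * r0"] by (simp add: ac_simps)
  obtain p where p: "x * p * p + e * p + z = 0"
    using padic_hensel_quadratic[OF prime_card_2 root simple] by blast
  have "mat_congruent (mat2 (2 * x) e (2 * z)) (mat2 0 (2 * x * p + e) (2 * x))"
    using mat_congruent_mat2_shift[of x e z p] unfolding p by simp
  moreover have "2 * x * p + e dvd 1"
    using not_dvd_add_mult[OF e, where y = "x * p"] by (simp add: two_adic_unit_iff ac_simps)
  then have "mat_congruent (mat2 0 (2 * x * p + e) (2 * x)) (mat2 0 1 0)"
    by (rule mat_congruent_hyperbolic_plane)
  ultimately show ?thesis by (rule mat_congruent_trans[OF _ _ mat2_carrier])
qed

lemma two_adic_even_form_anisotropic:
  fixes x e z :: "2 padic_int"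
  assumes e: "\<not> 2 dvd e" and x: "\<not> 2 dvd x" and z: "\<not> 2 dvd z"
  shows "mat_congruent (mat2 (2 * x) e (2 * z)) (mat2 2 1 2)"
proof -
  have root: "of_nat CARD(2) dvd x * 0 * 0 + e * 0 + (z - 1)"
    using z two_adic_odd_iff by simp
  have simple: "\<not> of_nat CARD(2) dvd 2 * x * 0 + e"
    using e by simp
  obtain p where p: "x * p * p + e * p + (z - 1) = 0"
    using padic_hensel_quadratic[OF prime_card_2 root simple] by blast
  then have "x * p * p + e * p + z = 1" by (simp add: algebra_simps)
  then have "mat_congruent (mat2 (2 * x) e (2 * z)) (mat2 2 (2 * x * p + e) (2 * x))"
    using mat_congruent_mat2_shift[of x e z p] by simp
  moreover have "\<not> 2 dvd 2 * x * p + e"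
    using not_dvd_add_mult[OF e, where y = "x * p"] by (simp add: ac_simps)
  then have "mat_congruent (mat2 2 (2 * x * p + e) (2 * x)) (mat2 2 1 2)"
    using x by (rule two_adic_anisotropic_plane)
  ultimately show ?thesis by (rule mat_congruent_trans[OF _ _ mat2_carrier])
qed

section \<open>Classification over \<open>\<int>\<^sub>2\<close>\<close>

definition T_classified :: "'a::comm_ring_1 mat \<Rightarrow> 'a mat \<Rightarrow> bool" where
  "T_classified M M' \<longleftrightarrow>
     (if \<exists>i \<in> {1..4::nat}. M \<in> T_set i
      then \<forall>i \<in> {1..4::nat}. M \<in> T_set i \<longrightarrow> (\<exists>N \<in> T_set i. mat_congruent M' N)
      else mat_congruent M' M)"

lemma T_set_disjoint:
  fixes M :: "'a::{comm_ring_1, ring_char_0} mat"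
  shows "M \<in> T_set i \<Longrightarrow> M \<in> T_set j \<Longrightarrow> i = j"
  unfolding T_set_def by (auto split: if_splits)

lemma T_classifiedI:
  fixes M :: "'a::{comm_ring_1, ring_char_0} mat"
  assumes "M \<in> T_set i" and "N \<in> T_set i" and "mat_congruent M' N"
  shows "T_classified M M'"
proof -
  have "i \<in> {1..4}" using assms(1) unfolding T_set_def by (auto split: if_splits)
  then have "\<exists>i \<in> {1..4::nat}. M \<in> T_set i" using assms(1) by blast
  moreover have "\<forall>j \<in> {1..4::nat}. M \<in> T_set j \<longrightarrow> (\<exists>N \<in> T_set j. mat_congruent M' N)"
    using assms T_set_disjoint[of M i] by blast
  ultimately show ?thesis unfolding T_classified_def by simp
qed

lemma T_classified_outside:
  "(\<And>i. M \<notin> T_set i) \<Longrightarrow> mat_congruent M' M \<Longrightarrow> T_classified M M'"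
  by (simp add: T_classified_def)

lemma M_list_cases:
  fixes M :: "'a::comm_ring_1 mat"
  assumes "M \<in> M_list d"
  obtains (scalar) k :: int where "k \<in> {1, 3, 5, 7}" and "M = mat1 (2 ^ d * of_int k)"
    | (binary) a0 :: 'a where "a0 \<in> {0, 2}" and "M = mat2 (2 ^ d * a0) (2 ^ d) (2 ^ d * a0)"
proof -
  consider "M = mat1 (2 ^ d)" | "M = mat1 (3 * 2 ^ d)" | "M = mat1 (5 * 2 ^ d)" | "M = mat1 (7 * 2 ^ d)"
    | "M = mat2 0 (2 ^ d) 0" | "M = mat2 (2 ^ (d + 1)) (2 ^ d) (2 ^ (d + 1))"
    using assms unfolding M_list_def by blast
  then show thesis
  proof cases
    case 1 then show ?thesis using scalar[of 1] by simp
  next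
    case 2 then show ?thesis using scalar[of 3] by (simp add: mult.commute)
  next
    case 3 then show ?thesis using scalar[of 5] by (simp add: mult.commute)
  next
    case 4 then show ?thesis using scalar[of 7] by (simp add: mult.commute)
  next
    case 5 then show ?thesis using binary[of 0] by simp
  next
    case 6 then show ?thesis using binary[of 2] by (simp add: mult.commute)
  qed
qed

lemma two_adic_pow_nonzero: "(2::2 padic_int) ^ d \<noteq> 0"
  using padic_pow_nonzero[where 'p=2, of d] by simp

lemma two_adic_pow_ne_2:
  assumes "d \<ge> 2"
  shows "(2::2 padic_int) ^ d \<noteq> 2"
proof
  assume "(2::2 padic_int) ^ d = 2"
  then have "of_nat (2 ^ d) = (of_nat 2 :: 2 padic_int)" by simp
  then have "(2::nat) ^ d = 2" by (simp only: of_nat_eq_iff)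
  moreover have "(2::nat) ^ 2 \<le> 2 ^ d" using assms by (rule power_increasing) simp
  ultimately show False by simp
qed

lemma mat1_of_int_notin_T_set:
  "(8::int) dvd n \<Longrightarrow> mat1 (of_int n :: 'a::{comm_ring_1, ring_char_0}) \<notin> T_set i"
  unfolding T_set_def dvd_eq_mod_eq_0 by (auto split: if_splits)

lemma two_adic_mat1_congruent:
  fixes t b c :: "2 padic_int"
  assumes "\<not> 2 dvd b" and "8 dvd b - c"
  shows "mat_congruent (mat1 (t * b)) (mat1 (t * c))"
proof -
  have "8 dvd c - b" using assms(2) by (metis dvd_minus_iff minus_diff_eq)
  then obtain s where "s dvd 1" and "c = s ^ 2 * b"
    using two_adic_square_class[OF assms(1)] by blast
  then show ?thesis using mat_congruent_mat1[of s "t * b"] by (simp add: ac_simps)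
qed

lemma two_adic_mat1_normal_form:
  fixes M' :: "2 padic_int mat"
  assumes "d \<ge> 1" and "odd k" and "M' \<in> carrier_mat 1 1"
    and "mat_inv_diff_integral (mat1 (2 ^ d * of_int k)) M'"
  obtains b where "M' = mat1 (2 ^ d * b)" and "\<not> 2 dvd b" and "2 ^ d dvd b - of_int k"
proof -
  let ?t = "(2::2 padic_int) ^ d"
  obtain \<beta> where M': "M' = mat1 \<beta>" using carrier_mat_1_eq_mat1[OF assms(3)] by blast
  obtain b where b: "\<beta> = ?t * b" and cong: "?t dvd b - of_int k"
    using inv_diff_integral_scaled[OF prime_card_2 two_adic_pow_nonzero] assms(4)
    unfolding M' mat_inv_diff_integral_mat1_iff by blast
  have k_odd: "\<not> 2 dvd (of_int k :: 2 padic_int)"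
    using two_pow_dvd_of_int_iff[of 1 k] \<open>odd k\<close> by simp
  have "2 ^ 1 dvd ?t" using \<open>d \<ge> 1\<close> by (rule le_imp_power_dvd)
  then have "2 dvd ?t" by simp
  then have "2 dvd b - of_int k" using cong by (rule dvd_trans)
  then have "\<not> 2 dvd b" using k_odd by (rule not_dvd_if_dvd_diff)
  then show thesis using that M' b cong by blast
qed

lemma two_adic_mat1_classification:
  fixes M' :: "2 padic_int mat"
  assumes "d \<ge> 1" and k: "k \<in> {1, 3, 5, 7}" and "M' \<in> carrier_mat 1 1"
    and "mat_inv_diff_integral (mat1 (2 ^ d * of_int k)) M'"
  shows "T_classified (mat1 (2 ^ d * of_int k)) M'"
proof -
  let ?t = "(2::2 padic_int) ^ d"
  have "odd k" using k by auto
  obtain b where M': "M' = mat1 (?t * b)" and b_odd: "\<not> 2 dvd b" and cong: "?t dvd b - of_int k"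
    using two_adic_mat1_normal_form[OF \<open>d \<ge> 1\<close> \<open>odd k\<close> assms(3,4)] by blast
  obtain c where c: "c \<in> {1, 3, 5, 7}" "8 dvd b - of_int c"
    using two_adic_odd_residue_mod_8[OF b_odd] by blast
  have congruent: "mat_congruent M' (mat1 (?t * of_int c))"
    unfolding M' using b_odd c(2) by (rule two_adic_mat1_congruent)
  consider "d = 1" | "d = 2" | "d \<ge> 3" using \<open>d \<ge> 1\<close> by linarith
  then show ?thesis
  proof cases
    case 1
    show ?thesis
      by (rule T_classifiedI[of _ 1 "mat1 (?t * of_int c)"])
        (use k c congruent 1 in \<open>auto simp: T_set_def\<close>)
  next
    case 2
    have "4 dvd b - of_int k" using cong 2 by simp
    moreover have "4 dvd b - of_int c"
      using c(2) by (rule dvd_trans[rotated]) (rule dvdI[where k = 2], simp)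
    ultimately have "4 dvd (b - of_int k) - (b - of_int c)" by (rule dvd_diff)
    then have "(2::2 padic_int) ^ 2 dvd of_int (c - k)" by simp
    then have "4 dvd c - k" using two_pow_dvd_of_int_iff[of 2 "c - k"] by simp
    then have "k \<in> {1, 5} \<and> c \<in> {1, 5} \<or> k \<in> {3, 7} \<and> c \<in> {3, 7}"
      using k c(1) by auto
    then show ?thesis
    proof (elim disjE conjE)
      assume "k \<in> {1, 5}" "c \<in> {1, 5}"
      then show ?thesis using congruent 2
        by (intro T_classifiedI[of _ 3 "mat1 (?t * of_int c)"]) (auto simp: T_set_def)
    next
      assume "k \<in> {3, 7}" "c \<in> {3, 7}"
      then show ?thesis using congruent 2
        by (intro T_classifiedI[of _ 4 "mat1 (?t * of_int c)"]) (auto simp: T_set_def)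
    qed
  next
    case 3
    have "2 ^ 3 dvd ?t" using 3 by (rule le_imp_power_dvd)
    then have "8 dvd ?t" by simp
    then have "8 dvd b - of_int k" using cong by (rule dvd_trans)
    with b_odd have "mat_congruent M' (mat1 (?t * of_int k))"
      unfolding M' by (rule two_adic_mat1_congruent)
    moreover have "mat1 (?t * of_int k) \<notin> T_set i" for i
    proof -
      have "(2::int) ^ 3 dvd 2 ^ d * k" by (rule dvd_mult2[OF le_imp_power_dvd[OF 3]])
      then show ?thesis using mat1_of_int_notin_T_set[of "2 ^ d * k"] by simp
    qed
    ultimately show ?thesis by (intro T_classified_outside)
  qed
qed

lemma two_adic_even_form_classification:
  fixes x e z :: "2 padic_int"
  assumes e: "\<not> 2 dvd e"
  obtains N where "N \<in> {mat2 0 1 0, mat2 2 1 2}" and "mat_congruent (mat2 (2 * x) e (2 * z)) N"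
proof (cases "2 dvd x * z")
  case True
  then show thesis using that two_adic_even_form_hyperbolic[OF e] by blast
next
  case False
  then have "\<not> 2 dvd x" "\<not> 2 dvd z" by auto
  then show thesis using that two_adic_even_form_anisotropic[OF e] by blast
qed

lemma two_adic_even_form_congruent:
  fixes x e z a0 :: "2 padic_int"
  assumes e: "\<not> 2 dvd e" and a0: "a0 \<in> {0, 2}"
    and "4 dvd 2 * x - a0" and "4 dvd 2 * z - a0"
  shows "mat_congruent (mat2 (2 * x) e (2 * z)) (mat2 a0 1 a0)"
proof -
  have cancel: "2 dvd y" if "4 dvd 2 * y" for y :: "2 padic_int"
    using padic_dvd_mult_cancel_left[OF prime_card_2, of 2 2 y] that by simp
  show ?thesis
  proof (cases "a0 = 0")
    case True
    then have "2 dvd x" using cancel \<open>4 dvd 2 * x - a0\<close> by simp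
    then show ?thesis using True two_adic_even_form_hyperbolic[OF e] by simp
  next
    case False
    then have a0_2: "a0 = 2" using a0 by simp
    have "2 dvd x - 1" "2 dvd z - 1"
      using cancel[of "x - 1"] cancel[of "z - 1"] assms(3,4) unfolding a0_2
      by (simp_all add: right_diff_distrib)
    then show ?thesis using a0_2 two_adic_even_form_anisotropic[OF e] two_adic_odd_iff by simp
  qed
qed

lemma two_adic_mat2_normal_form:
  fixes M' :: "2 padic_int mat"
  assumes "d \<ge> 1" and a0: "a0 \<in> {0, 2}"
    and M': "M' \<in> carrier_mat 2 2" "symmetric_mat M'" "det M' \<noteq> 0"
    and integral: "mat_inv_diff_integral (mat2 (2 ^ d * a0) (2 ^ d) (2 ^ d * a0)) M'"
  obtains x e z where "M' = 2 ^ d \<cdot>\<^sub>m mat2 (2 * x) e (2 * z)" and "\<not> 2 dvd e"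
    and "2 ^ d dvd 2 * x - a0" and "2 ^ d dvd 2 * z - a0"
proof -
  let ?t = "(2::2 padic_int) ^ d"
  define a b c where "a = M' $$ (0, 0)" and "b = M' $$ (0, 1)" and "c = M' $$ (1, 1)"
  have M'_eq: "M' = mat2 a b c" unfolding a_def b_def c_def by (rule symmetric_mat_eq_mat2[OF M'(1,2)])
  have "2 ^ 1 dvd ?t" using \<open>d \<ge> 1\<close> by (rule le_imp_power_dvd)
  then have "of_nat CARD(2) dvd ?t" by simp
  moreover have "a0 * a0 - 1 * 1 dvd 1"
    using a0 two_adic_unit_iff[of 3] two_pow_dvd_of_int_iff[of 1 3] by auto
  moreover have "a * c - b * b \<noteq> 0" using M'(3) unfolding M'_eq by simp
  moreover have "mat_inv_diff_integral (mat2 (?t * a0) (?t * 1) (?t * a0)) (mat2 a b c)"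
    using integral unfolding M'_eq by simp
  ultimately obtain a1 b1 c1 where abc: "a = ?t * a1" "b = ?t * b1" "c = ?t * c1"
    and cong: "?t dvd a1 - a0" "?t dvd b1 - 1" "?t dvd c1 - a0"
    using inv_diff_integral_mat2_scaled[OF prime_card_2 _ two_adic_pow_nonzero] by metis
  have "2 dvd ?t" using \<open>2 ^ 1 dvd ?t\<close> by simp
  have "2 dvd a0" using a0 by auto
  have "2 dvd a1" using dvd_trans[OF \<open>2 dvd ?t\<close> cong(1)] \<open>2 dvd a0\<close>
    by (metis dvd_add diff_add_cancel)
  then obtain x where x: "a1 = 2 * x" ..
  have "2 dvd c1" using dvd_trans[OF \<open>2 dvd ?t\<close> cong(3)] \<open>2 dvd a0\<close>
    by (metis dvd_add diff_add_cancel)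
  then obtain z where z: "c1 = 2 * z" ..
  have "\<not> 2 dvd b1"
    using dvd_trans[OF \<open>2 dvd ?t\<close> cong(2)] two_adic_odd_iff by blast
  moreover have "M' = ?t \<cdot>\<^sub>m mat2 (2 * x) b1 (2 * z)"
    unfolding M'_eq abc x z smult_mat2 ..
  ultimately show thesis using that cong(1,3) unfolding x z by blast
qed

lemma two_adic_mat2_classification:
  fixes M' :: "2 padic_int mat"
  assumes "d \<ge> 1" and a0: "a0 \<in> {0, 2}"
    and M': "M' \<in> carrier_mat 2 2" "symmetric_mat M'" "det M' \<noteq> 0"
    and integral: "mat_inv_diff_integral (mat2 (2 ^ d * a0) (2 ^ d) (2 ^ d * a0)) M'"
  shows "T_classified (mat2 (2 ^ d * a0) (2 ^ d) (2 ^ d * a0)) M'"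
proof -
  let ?t = "(2::2 padic_int) ^ d"
  obtain x e z where M'_eq: "M' = ?t \<cdot>\<^sub>m mat2 (2 * x) e (2 * z)" and e: "\<not> 2 dvd e"
    and cong: "?t dvd 2 * x - a0" "?t dvd 2 * z - a0"
    using two_adic_mat2_normal_form[OF assms] by blast
  have scaled: "mat_congruent M' (?t \<cdot>\<^sub>m N)"
    if "mat_congruent (mat2 (2 * x) e (2 * z)) N" for N
    unfolding M'_eq using that by (rule mat_congruent_smult[OF _ mat2_carrier])
  consider "d = 1" | "d \<ge> 2" using \<open>d \<ge> 1\<close> by linarith
  then show ?thesis
  proof cases
    case 1
    have M_in: "mat2 (?t * a0) ?t (?t * a0) \<in> T_set 2"
      using a0 1 by (auto simp: T_set_def)
    obtain N where N: "N \<in> {mat2 0 1 0, mat2 2 1 2}"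
      and N_congruent: "mat_congruent (mat2 (2 * x) e (2 * z)) N"
      using two_adic_even_form_classification[OF e] by blast
    have "?t \<cdot>\<^sub>m N \<in> T_set 2"
      using N 1 by (auto simp: T_set_def smult_mat2)
    then show ?thesis by (rule T_classifiedI[OF M_in _ scaled[OF N_congruent]])
  next
    case 2
    have outside: "mat2 (?t * a0) ?t (?t * a0) \<notin> T_set i" for i
      using two_adic_pow_ne_2[OF 2] unfolding T_set_def by (auto split: if_splits)
    have "2 ^ 2 dvd ?t" using 2 by (rule le_imp_power_dvd)
    then have "4 dvd 2 * x - a0" "4 dvd 2 * z - a0" using cong dvd_trans by auto
    then have "mat_congruent (mat2 (2 * x) e (2 * z)) (mat2 a0 1 a0)"
      using two_adic_even_form_congruent[OF e a0] by blast
    from scaled[OF this] have "mat_congruent M' (mat2 (?t * a0) ?t (?t * a0))"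
      by (simp add: smult_mat2)
    with outside show ?thesis by (intro T_classified_outside)
  qed
qed

theorem mainTheorem3:
  shows "(prime CARD('p::card2) \<and> odd CARD('p) \<longrightarrow>
           (\<forall>\<alpha> \<alpha>' :: 'p padic_int.
              \<alpha> \<noteq> 0 \<and> \<alpha>' \<noteq> 0 \<and> of_nat CARD('p) dvd \<alpha> \<and> of_nat CARD('p) dvd \<alpha>' \<and>
              inv_diff_integral \<alpha> \<alpha>' \<longrightarrow>
              (\<exists>u. u dvd 1 \<and> \<alpha>' = \<alpha> * u ^ 2)))
       \<and> (\<forall>(d::nat) (M :: 2 padic_int mat) M'.
              d \<ge> 1 \<and> M \<in> M_list d \<and>
              M' \<in> carrier_mat (dim_row M) (dim_row M) \<and> symmetric_mat M' \<and> det M' \<noteq> 0 \<and>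
              mat_inv_diff_integral M M' \<longrightarrow>
              (if (\<exists>i \<in> {1..4::nat}. M \<in> T_set i)
               then (\<forall>i \<in> {1..4::nat}. M \<in> T_set i \<longrightarrow> (\<exists>N \<in> T_set i. mat_congruent M' N))
               else mat_congruent M' M))"
proof (intro conjI impI allI; elim conjE)
  fix \<alpha> \<alpha>' :: "'p padic_int"
  assume "prime CARD('p)" "odd CARD('p)" "\<alpha> \<noteq> 0" "of_nat CARD('p) dvd \<alpha>"
    "inv_diff_integral \<alpha> \<alpha>'"
  then show "\<exists>u. u dvd 1 \<and> \<alpha>' = \<alpha> * u ^ 2" by (metis inv_diff_integral_unit_square)
next
  fix d :: nat and M M' :: "2 padic_int mat"
  assume "d \<ge> 1" "M \<in> M_list d" and M': "M' \<in> carrier_mat (dim_row M) (dim_row M)"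
    "symmetric_mat M'" "det M' \<noteq> 0" and integral: "mat_inv_diff_integral M M'"
  from \<open>M \<in> M_list d\<close> have "T_classified M M'"
  proof (cases rule: M_list_cases)
    case (scalar k)
    then show ?thesis
      using two_adic_mat1_classification[OF \<open>d \<ge> 1\<close> scalar(1)] M'(1) integral by simp
  next
    case (binary a0)
    then show ?thesis
      using two_adic_mat2_classification[OF \<open>d \<ge> 1\<close> binary(1)] M' integral by simp
  qed
  then show "if \<exists>i \<in> {1..4::nat}. M \<in> T_set i
      then \<forall>i \<in> {1..4::nat}. M \<in> T_set i \<longrightarrow> (\<exists>N \<in> T_set i. mat_congruent M' N)
      else mat_congruent M' M"
    unfolding T_classified_def .
qed

end
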